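(* Let $n\ge2$ and $\mathbf{F}\in\mathbb{R}^n$ with $F_k>0$ for all $k$ and $F_k\ge F_{k+1}$ for $3\le k\le n-1$. Let $U_i=\frac{i}{3/F_1+\sum_{k=2}^i1/F_k}$ and $V_i=\frac{i-1}{\sum_{k=1}^i1/F_k}$ for $2\le i\le n$; let $u$ be the least index in $\arg\max_{2\le i\le n}U_i$ and $v$ the least index in $\arg\max_{2\le i\le n}V_i$. Assume $U_u\ge V_v$. Define $\boldsymbol\mu\in\mathbb{R}^n$ by $\mu_1=\frac12-\frac{U_u}{F_1}$, $\mu_k=1-\frac{U_u}{F_k}$ for $3\le k\le u$, and $\mu_k=0$ otherwise. Then: (1) $\mu_k\ge0$ for all $1\le k\le n$; (2) $F_1(\frac12-\mu_1)=F_2\big(\frac12+3\mu_1+\sum_{i=3}^u\mu_i\big)=F_k(1-\mu_k)=U_u$ for all $3\le k\le u$; (3) $F_k\le U_u$ for all $u+1\le k\le n$.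
   Context: Note $U_u=\frac{u}{3/F_1+\sum_{k=2}^u1/F_k}$. *)

theory Defs
  imports Complex_Main
begin

text \<open>Vectors F in R^n are represented as functions nat => real, indexed 1..n.\<close>

definition U :: "(nat \<Rightarrow> real) \<Rightarrow> nat \<Rightarrow> real" where
  "U F i = real i / (3 / F 1 + (\<Sum>k=2..i. 1 / F k))"

definition V :: "(nat \<Rightarrow> real) \<Rightarrow> nat \<Rightarrow> real" where
  "V F i = (real i - 1) / (\<Sum>k=1..i. 1 / F k)"

definition least_argmax :: "(nat \<Rightarrow> real) \<Rightarrow> nat \<Rightarrow> nat" where
  "least_argmax G n = (LEAST i. 2 \<le> i \<and> i \<le> n \<and> (\<forall>j. 2 \<le> j \<and> j \<le> n \<longrightarrow> G j \<le> G i))"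

definition mu :: "(nat \<Rightarrow> real) \<Rightarrow> nat \<Rightarrow> nat \<Rightarrow> real" where
  "mu F n k = (let u = least_argmax (U F) n in
     if k = 1 then 1/2 - U F u / F 1
     else if 3 \<le> k \<and> k \<le> u then 1 - U F u / F k
     else 0)"

end

theory Submission
  imports Defs
begin

text \<open>
  Write \<open>U F i = i / S i\<close> with \<open>S = U_denom F\<close>. Passing from \<open>i\<close> to \<open>i + 1\<close> adds \<open>1\<close> to the
  numerator and \<open>1 / F (i + 1)\<close> to the denominator, so \<open>U F (i + 1)\<close> lies between \<open>U F i\<close> and
  \<open>F (i + 1)\<close>. Maximality of \<open>U F u\<close> therefore gives \<open>F (u + 1) \<le> U F u\<close>, hence (3) because the
  tail of \<open>F\<close> is non-increasing, and minimality of \<open>u\<close> gives \<open>U F u < F u \<le> F k\<close> for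
  \<open>3 \<le> k \<le> u\<close>, i.e. \<open>\<mu>\<^sub>k \<ge> 0\<close>. As \<open>V F u\<close> is at most the maximum of \<open>V F\<close>, the
  hypothesis gives \<open>V F u \<le> U F u\<close>, which unfolds to \<open>2 U F u \<le> F 1\<close>, i.e. \<open>\<mu>\<^sub>1 \<ge> 0\<close>; the
  identities (2) are algebra with \<open>U F u * S u = u\<close>.
\<close>

lemma least_argmax_is_argmax:
  fixes G :: "nat \<Rightarrow> real"
  assumes "2 \<le> n"
  shows "2 \<le> least_argmax G n \<and> least_argmax G n \<le> n
    \<and> (\<forall>j. 2 \<le> j \<and> j \<le> n \<longrightarrow> G j \<le> G (least_argmax G n))"
proof -
  have "Max (G ` {2..n}) \<in> G ` {2..n}"
    using assms by (intro Max_in) auto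
  then obtain i where "i \<in> {2..n}" "G i = Max (G ` {2..n})"
    by auto
  then have "2 \<le> i \<and> i \<le> n \<and> (\<forall>j. 2 \<le> j \<and> j \<le> n \<longrightarrow> G j \<le> G i)"
    by auto
  then show ?thesis
    unfolding least_argmax_def by (rule LeastI)
qed

lemma least_argmax_less:
  fixes G :: "nat \<Rightarrow> real"
  assumes "2 \<le> n" "2 \<le> j" "j < least_argmax G n"
  shows "G j < G (least_argmax G n)"
proof -
  have "\<not> (2 \<le> j \<and> j \<le> n \<and> (\<forall>i. 2 \<le> i \<and> i \<le> n \<longrightarrow> G i \<le> G j))"
    using not_less_Least assms(3) unfolding least_argmax_def by blast
  then show ?thesis
    using least_argmax_is_argmax[OF assms(1), of G] assms(2,3) by force
qed

lemma antitone_tail_le: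
  fixes F :: "nat \<Rightarrow> real"
  assumes "\<And>k. 3 \<le> k \<Longrightarrow> k \<le> n - 1 \<Longrightarrow> F k \<ge> F (k + 1)"
    and "3 \<le> k" "k \<le> m" "m \<le> n"
  shows "F m \<le> F k"
  using assms(3,4)
proof (induction m rule: dec_induct)
  case base
  then show ?case by simp
next
  case (step j)
  have "F (Suc j) \<le> F j"
    using assms(1)[of j] assms(2) step by simp
  with step show ?case
    by simp
qed

lemma mean_step_le_iff:
  fixes a S x :: real
  assumes "S > 0" "x > 0"
  shows "(a + 1) / (S + 1 / x) \<le> a / S \<longleftrightarrow> x \<le> a / S"
proof -
  have "S + 1 / x > 0"
    using assms by (simp add: add_pos_pos)
  then show ?thesis
    using assms by (simp add: field_simps)
qed

lemma mean_step_less_iff: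
  fixes a S x :: real
  assumes "S > 0" "x > 0"
  shows "(a + 1) / (S + 1 / x) < x \<longleftrightarrow> a / S < x"
proof -
  have "S + 1 / x > 0"
    using assms by (simp add: add_pos_pos)
  then show ?thesis
    using assms by (simp add: field_simps)
qed

definition U_denom :: "(nat \<Rightarrow> real) \<Rightarrow> nat \<Rightarrow> real" where
  "U_denom F i = 3 / F 1 + (\<Sum>k=2..i. 1 / F k)"

lemma U_eq_div_denom: "U F i = real i / U_denom F i"
  unfolding U_def U_denom_def ..

lemma U_denom_Suc: "1 \<le> i \<Longrightarrow> U_denom F (Suc i) = U_denom F i + 1 / F (Suc i)"
  unfolding U_denom_def by (simp add: sum.cl_ivl_Suc)

lemma U_denom_pos:
  assumes "\<And>k. 1 \<le> k \<Longrightarrow> k \<le> i \<Longrightarrow> F k > 0" "1 \<le> i"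
  shows "U_denom F i > 0"
proof -
  have "(\<Sum>k=2..i. 1 / F k) \<ge> 0"
    using assms(1) by (intro sum_nonneg) (simp add: less_imp_le)
  moreover have "3 / F 1 > 0"
    using assms by simp
  ultimately show ?thesis
    unfolding U_denom_def by linarith
qed

lemma U_times_denom: "1 \<le> i \<Longrightarrow> (\<And>k. 1 \<le> k \<Longrightarrow> k \<le> i \<Longrightarrow> F k > 0) \<Longrightarrow>
    U F i * U_denom F i = real i"
  using U_denom_pos[of i F] by (simp add: U_eq_div_denom)

lemma U_Suc_le_iff:
  assumes "\<And>k. 1 \<le> k \<Longrightarrow> k \<le> Suc i \<Longrightarrow> F k > 0" "1 \<le> i"
  shows "U F (Suc i) \<le> U F i \<longleftrightarrow> F (Suc i) \<le> U F i"
  using mean_step_le_iff[of "U_denom F i" "F (Suc i)" "real i"] U_denom_pos[of i F] assms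
  by (simp add: U_eq_div_denom U_denom_Suc add.commute)

lemma U_Suc_less_iff:
  assumes "\<And>k. 1 \<le> k \<Longrightarrow> k \<le> Suc i \<Longrightarrow> F k > 0" "1 \<le> i"
  shows "U F (Suc i) < F (Suc i) \<longleftrightarrow> U F i < F (Suc i)"
  using mean_step_less_iff[of "U_denom F i" "F (Suc i)" "real i"] U_denom_pos[of i F] assms
  by (simp add: U_eq_div_denom U_denom_Suc add.commute)

lemma V_le_U_iff:
  assumes "\<And>k. 1 \<le> k \<Longrightarrow> k \<le> i \<Longrightarrow> F k > 0" "1 \<le> i"
  shows "V F i \<le> U F i \<longleftrightarrow> 2 * U F i \<le> F 1"
proof -
  define T where "T = (\<Sum>k=1..i. 1 / F k)"
  have "T = 1 / F 1 + (\<Sum>k=2..i. 1 / F k)"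
    unfolding T_def using assms(2) by (simp add: sum.atLeast_Suc_atMost numeral_2_eq_2)
  then have denom: "U_denom F i = 2 / F 1 + T"
    unfolding U_denom_def by simp
  have "T > 0"
    unfolding T_def using assms by (intro sum_pos) auto
  moreover have "F 1 > 0"
    using assms by simp
  ultimately have "2 + T * F 1 > 0"
    by (simp add: add_pos_pos)
  with \<open>T > 0\<close> \<open>F 1 > 0\<close> have "V F i \<le> U F i \<longleftrightarrow> 2 * real i \<le> 2 + T * F 1"
    and "2 * U F i \<le> F 1 \<longleftrightarrow> F 1 * (2 * real i) \<le> F 1 * (2 + T * F 1)"
    unfolding V_def U_eq_div_denom denom T_def[symmetric] by (simp_all add: field_simps)
  with \<open>F 1 > 0\<close> show ?thesis
    by simp
qed

lemma F_Suc_least_argmax_U_le: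
  assumes "2 \<le> n" "\<And>k. 1 \<le> k \<Longrightarrow> k \<le> n \<Longrightarrow> F k > 0"
    and "least_argmax (U F) n < n"
  defines "u \<equiv> least_argmax (U F) n"
  shows "F (Suc u) \<le> U F u"
proof -
  have "2 \<le> u" "U F (Suc u) \<le> U F u"
    using least_argmax_is_argmax[OF assms(1), of "U F"] assms(3) unfolding u_def by auto
  with assms(2,3) show ?thesis
    unfolding u_def by (subst U_Suc_le_iff[symmetric]) auto
qed

lemma U_less_F_least_argmax_U:
  assumes "2 \<le> n" "\<And>k. 1 \<le> k \<Longrightarrow> k \<le> n \<Longrightarrow> F k > 0"
    and "3 \<le> least_argmax (U F) n"
  defines "u \<equiv> least_argmax (U F) n"
  shows "U F u < F u"
proof -
  obtain w where w: "u = Suc w" "2 \<le> w"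
    using assms(3) unfolding u_def by (metis Suc_le_D Suc_le_mono numeral_3_eq_3 numeral_2_eq_2)
  have "u \<le> n"
    using least_argmax_is_argmax[OF assms(1)] unfolding u_def by blast
  then have pos: "\<And>k. 1 \<le> k \<Longrightarrow> k \<le> Suc w \<Longrightarrow> F k > 0"
    using assms(2) w(1) by simp
  have "U F w < U F u"
    using least_argmax_less[OF assms(1) w(2), of "U F"] w(1) unfolding u_def by simp
  then have "U F w < F u"
    using U_Suc_le_iff[of w F, OF pos] w by fastforce
  then show ?thesis
    using U_Suc_less_iff[of w F, OF pos] w by simp
qed

lemma F2_mu_balance:
  assumes "2 \<le> least_argmax (U F) n"
    and "\<And>k. 1 \<le> k \<Longrightarrow> k \<le> least_argmax (U F) n \<Longrightarrow> F k > 0"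
  defines "u \<equiv> least_argmax (U F) n"
  shows "F 2 * (1/2 + 3 * mu F n 1 + (\<Sum>i=3..u. mu F n i)) = U F u"
proof -
  have "(\<Sum>i=3..u. mu F n i) = (\<Sum>i=3..u. 1 - U F u * (1 / F i))"
    by (intro sum.cong) (auto simp: mu_def Let_def u_def)
  also have "\<dots> = (real u - 2) - U F u * (\<Sum>i=3..u. 1 / F i)"
    using assms(1) by (simp add: sum_subtractf sum_distrib_left of_nat_diff u_def)
  finally have mu_sum: "(\<Sum>i=3..u. mu F n i) = (real u - 2) - U F u * (\<Sum>i=3..u. 1 / F i)" .
  have "F 2 > 0"
    using assms(1,2) by simp
  have "U_denom F u = 3 / F 1 + 1 / F 2 + (\<Sum>i=3..u. 1 / F i)"
    using assms(1) unfolding U_denom_def u_def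
    by (simp add: sum.atLeast_Suc_atMost numeral_3_eq_3 numeral_2_eq_2)
  then have "1/2 + 3 * mu F n 1 + (\<Sum>i=3..u. mu F n i) = real u - U F u * (U_denom F u - 1 / F 2)"
    unfolding mu_sum by (simp add: mu_def Let_def u_def algebra_simps)
  also have "\<dots> = U F u / F 2"
    using U_times_denom[of u F] assms unfolding u_def by (simp add: algebra_simps)
  finally show ?thesis
    using \<open>F 2 > 0\<close> by simp
qed

theorem lemma8:
  fixes F :: "nat \<Rightarrow> real" and n :: nat
  assumes "n \<ge> 2"
    and "\<And>k. 1 \<le> k \<Longrightarrow> k \<le> n \<Longrightarrow> F k > 0"
    and "\<And>k. 3 \<le> k \<Longrightarrow> k \<le> n - 1 \<Longrightarrow> F k \<ge> F (k + 1)"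
    and "U F (least_argmax (U F) n) \<ge> V F (least_argmax (V F) n)"
  shows "(\<forall>k. 1 \<le> k \<and> k \<le> n \<longrightarrow> mu F n k \<ge> 0)
    \<and> (let u = least_argmax (U F) n in
         F 1 * (1/2 - mu F n 1) = U F u
       \<and> F 2 * (1/2 + 3 * mu F n 1 + (\<Sum>i=3..u. mu F n i)) = U F u
       \<and> (\<forall>k. 3 \<le> k \<and> k \<le> u \<longrightarrow> F k * (1 - mu F n k) = U F u)
       \<and> (\<forall>k. u + 1 \<le> k \<and> k \<le> n \<longrightarrow> F k \<le> U F u))"
proof -
  define u where "u = least_argmax (U F) n"
  have u: "2 \<le> u" "u \<le> n"
    using least_argmax_is_argmax[OF assms(1)] unfolding u_def by auto
  have "V F u \<le> U F u"
    using least_argmax_is_argmax[OF assms(1), of "V F"] u assms(4) unfolding u_def by force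
  then have mu1_nonneg: "2 * U F u \<le> F 1"
    using V_le_U_iff[of u F] u assms(2) by simp
  have F_antitone: "F m \<le> F k" if "3 \<le> k" "k \<le> m" "m \<le> n" for k m
    using antitone_tail_le[of n F k m] assms(3) that by blast
  have U_le_F: "U F u \<le> F k" if "3 \<le> k" "k \<le> u" for k
    using U_less_F_least_argmax_U[of n F] F_antitone[of k u] assms(1,2) u that
    unfolding u_def by fastforce
  have tail: "F k \<le> U F u" if "u + 1 \<le> k" "k \<le> n" for k
    using F_Suc_least_argmax_U_le[of n F] F_antitone[of "Suc u" k] assms(1,2) u that
    unfolding u_def by fastforce
  have "mu F n k \<ge> 0" if "1 \<le> k" "k \<le> n" for k
    using mu1_nonneg U_le_F[of k] assms(2)[of k] that
    by (auto simp: mu_def Let_def u_def[symmetric] field_simps)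
  moreover have "F 2 * (1/2 + 3 * mu F n 1 + (\<Sum>i=3..u. mu F n i)) = U F u"
    using F2_mu_balance[of F n] u assms(2) unfolding u_def by simp
  moreover have "F 1 * (1/2 - mu F n 1) = U F u"
    using assms(2)[of 1] assms(1) by (simp add: mu_def Let_def u_def[symmetric])
  moreover have "F k * (1 - mu F n k) = U F u" if "3 \<le> k" "k \<le> u" for k
    using assms(2)[of k] u that by (simp add: mu_def Let_def u_def[symmetric])
  ultimately show ?thesis
    using tail unfolding Let_def u_def[symmetric] by simp
qed

end
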